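(* Let $\nu\ge2$, $\rho>0$, $\lambda_1,\dots,\lambda_\nu>0$, and let $X$ have the density proportional to $\prod_{n=1}^\nu\lambda_n^{-1/2}\phi(\lambda_n^{-1/2}x_n)$ on $\{x:x^Tx<\rho\}$ and zero elsewhere ($\phi$ the standard normal density). Let $Y_n=\lambda_n^{-1}X_n^2$. Then $E(Y_2\mid Y_1=y_1)$ is nonincreasing in $y_1$ over $0<y_1<\rho/\lambda_1$. *)

theory Defs
  imports "HOL-Probability.Probability"
begin

definition trunc_normal_dens :: "('n::finite \<Rightarrow> real) \<Rightarrow> real \<Rightarrow> real ^ 'n \<Rightarrow> real" where
  "trunc_normal_dens lam rho x =
     (if x \<bullet> x < rho
      then (\<Prod>n\<in>UNIV. inverse (sqrt (lam n)) * std_normal_density (inverse (sqrt (lam n)) * x $ n))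
      else 0)"

end

theory Submission
  imports Defs
begin

(*
  Given X_i = x, the other coordinates of X are independent centred normals conditioned on having
  squared norm below rho - x^2. Hence E(Y_j | Y_i = y) = R (rho - lam_i y), where R s is the mean of
  Z_j^2 / lam_j given |Z|^2 < s, for an untruncated Gaussian vector Z on those coordinates, and it
  remains to show that R is nondecreasing.

  Splitting off Z_j writes R s = N s / D s, where N s and D s integrate phi_j(z) G(s - z^2) over z,
  N with the extra weight z^2 / lam_j, and G u is the probability that the squared norm of the
  remaining coordinates is below u. G is log-concave by induction on the number of coordinates: each
  step is a one-dimensional Prekopa-Leindler inequality, needed (and proved, via Brunn-Minkowski for
  symmetric intervals) only for symmetric decreasing functions. For s <= t, log-concavity gives
  G(t - z^2) G(s - w^2) >= G(t - w^2) G(s - z^2) whenever z^2 >= w^2, and symmetrising the double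
  integral N s * D t in (z, w) yields N s * D t <= N t * D s.
*)

section \<open>Prekopa--Leindler for symmetric decreasing functions on the line\<close>

definition abs_antimono :: "(real \<Rightarrow> real) \<Rightarrow> bool" where
  "abs_antimono f \<longleftrightarrow> (\<forall>z w. \<bar>z\<bar> \<le> \<bar>w\<bar> \<longrightarrow> f w \<le> f z)"

definition abs_down_closed :: "real set \<Rightarrow> bool" where
  "abs_down_closed S \<longleftrightarrow> (\<forall>z w. z \<in> S \<longrightarrow> \<bar>w\<bar> \<le> \<bar>z\<bar> \<longrightarrow> w \<in> S)"

lemma abs_down_closed_unbounded:
  assumes "abs_down_closed S" "\<not> bdd_above (abs ` S)"
  shows "S = UNIV"
proof -
  { fix w :: real
    from assms(2) obtain z where "z \<in> S" "\<not> \<bar>z\<bar> \<le> \<bar>w\<bar>"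
      unfolding bdd_above_def by auto
    with assms(1) have "w \<in> S" unfolding abs_down_closed_def by (meson linear) }
  then show ?thesis by auto
qed

lemma emeasure_abs_down_closed:
  assumes "abs_down_closed S" "S \<in> sets borel" "z0 \<in> S" "bdd_above (abs ` S)"
  shows "emeasure lborel S = ennreal (2 * Sup (abs ` S))"
proof -
  define a where "a = Sup (abs ` S)"
  have ub: "\<bar>z\<bar> \<le> a" if "z \<in> S" for z
    unfolding a_def using assms(4) that by (intro cSup_upper) auto
  have a0: "0 \<le> a" using ub[OF assms(3)] by linarith
  have sub1: "S \<subseteq> {-a..a}"
  proof
    fix x assume "x \<in> S" with ub[of x] show "x \<in> {-a..a}" by (auto simp: abs_le_iff)
  qed
  have sub2: "{-a<..<a} \<subseteq> S"
  proof
    fix w assume "w \<in> {-a<..<a}"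
    then have "\<bar>w\<bar> < a" by auto
    then obtain z where "z \<in> S" "\<bar>w\<bar> < \<bar>z\<bar>"
      unfolding a_def using assms(3,4) less_cSup_iff[of "abs ` S" "\<bar>w\<bar>"] by auto
    then show "w \<in> S" using assms(1) unfolding abs_down_closed_def by auto
  qed
  have "emeasure lborel S \<le> emeasure lborel {-a..a}" using sub1 by (intro emeasure_mono) auto
  also have "\<dots> = ennreal (2 * a)" using a0 by simp
  finally have upper: "emeasure lborel S \<le> ennreal (2 * a)" .
  have "ennreal (2 * a) = emeasure lborel {-a<..<a}" using a0 by simp
  also have "\<dots> \<le> emeasure lborel S" using sub2 assms(2) by (intro emeasure_mono) auto
  finally show ?thesis using upper unfolding a_def by simp
qed

lemma bdd_above_abs_if_scaled_subset:
  fixes A C :: "real set"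
  assumes "0 < s" "\<And>z. z \<in> A \<Longrightarrow> s * z \<in> C" "bdd_above (abs ` C)"
  shows "bdd_above (abs ` A)"
proof -
  from assms(3) obtain m where m: "\<And>x. x \<in> C \<Longrightarrow> \<bar>x\<bar> \<le> m"
    unfolding bdd_above_def by auto
  have "\<bar>z\<bar> \<le> m / s" if "z \<in> A" for z
    using m[OF assms(2)[OF that]] assms(1) by (simp add: abs_mult pos_le_divide_eq mult.commute)
  then show ?thesis unfolding bdd_above_def by auto
qed

lemma convex_comb_Sup_le:
  fixes X Y :: "real set"
  assumes "X \<noteq> {}" "Y \<noteq> {}" "0 < t" "t < 1"
    and le: "\<And>x y. x \<in> X \<Longrightarrow> y \<in> Y \<Longrightarrow> t * x + (1 - t) * y \<le> c"
  shows "t * Sup X + (1 - t) * Sup Y \<le> c"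
proof -
  have "Sup X \<le> (c - (1 - t) * y) / t" if "y \<in> Y" for y
    using assms(1,3) le[OF _ that] by (intro cSup_least) (auto simp: pos_le_divide_eq algebra_simps)
  then have "Sup Y \<le> (c - t * Sup X) / (1 - t)"
    using assms(2-4) by (intro cSup_least) (auto simp: pos_le_divide_eq pos_divide_le_eq algebra_simps)
  then show ?thesis using assms(4) by (simp add: pos_le_divide_eq algebra_simps)
qed

lemma brunn_minkowski_abs_down_closed:
  fixes A B C :: "real set" and t :: real
  assumes sA: "abs_down_closed A" and sB: "abs_down_closed B" and sC: "abs_down_closed C"
    and mA: "A \<in> sets borel" and mB: "B \<in> sets borel" and mC: "C \<in> sets borel"
    and A0: "0 \<in> A" and B0: "0 \<in> B" and t: "0 < t" "t < 1"
    and comb: "\<And>z w. z \<in> A \<Longrightarrow> w \<in> B \<Longrightarrow> t * z + (1 - t) * w \<in> C"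
  shows "ennreal t * emeasure lborel A + ennreal (1 - t) * emeasure lborel B \<le> emeasure lborel C"
proof (cases "bdd_above (abs ` C)")
  case False
  then have "C = UNIV" using abs_down_closed_unbounded[OF sC False] by blast
  then show ?thesis by simp
next
  case bC: True
  have bA: "bdd_above (abs ` A)"
    using comb B0 t bC by (intro bdd_above_abs_if_scaled_subset[of t A C]) force+
  have bB: "bdd_above (abs ` B)"
    using comb A0 t bC by (intro bdd_above_abs_if_scaled_subset[of "1 - t" B C]) force+
  define a b c where "a = Sup (abs ` A)" and "b = Sup (abs ` B)" and "c = Sup (abs ` C)"
  have absA: "\<bar>z\<bar> \<in> A" if "z \<in> A" for z using sA that unfolding abs_down_closed_def by auto
  have absB: "\<bar>z\<bar> \<in> B" if "z \<in> B" for z using sB that unfolding abs_down_closed_def by auto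
  have key: "t * \<bar>z\<bar> + (1 - t) * \<bar>w\<bar> \<le> c" if "z \<in> A" "w \<in> B" for z w
  proof -
    have "t * \<bar>z\<bar> + (1 - t) * \<bar>w\<bar> \<in> C" using comb[OF absA[OF that(1)] absB[OF that(2)]] .
    then have "\<bar>t * \<bar>z\<bar> + (1 - t) * \<bar>w\<bar>\<bar> \<le> c" unfolding c_def using bC by (intro cSup_upper) auto
    then show ?thesis by linarith
  qed
  have comb_le: "t * a + (1 - t) * b \<le> c"
    unfolding a_def b_def using A0 B0 t key by (intro convex_comb_Sup_le) auto
  have t1: "0 < 1 - t" using t by simp
  have a0: "0 \<le> a" unfolding a_def using bA A0 cSup_upper[of 0 "abs ` A"] by force
  have b0: "0 \<le> b" unfolding b_def using bB B0 cSup_upper[of 0 "abs ` B"] by force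
  have C0: "0 \<in> C" using comb[OF A0 B0] by simp
  have eA: "emeasure lborel A = ennreal (2 * a)" using emeasure_abs_down_closed[OF sA mA A0 bA] unfolding a_def .
  have eB: "emeasure lborel B = ennreal (2 * b)" using emeasure_abs_down_closed[OF sB mB B0 bB] unfolding b_def .
  have "ennreal t * emeasure lborel A + ennreal (1 - t) * emeasure lborel B
      = ennreal (t * (2 * a) + (1 - t) * (2 * b))"
    unfolding eA eB using a0 b0 t1 t(1) by (simp add: ennreal_mult ennreal_plus)
  also have "\<dots> \<le> ennreal (2 * c)" using comb_le by (intro ennreal_leI) linarith
  also have "\<dots> = emeasure lborel C" using emeasure_abs_down_closed[OF sC mC C0 bC] unfolding c_def by simp
  finally show ?thesis .
qed

lemma nn_integral_min_1_layer_cake: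
  fixes f :: "real \<Rightarrow> real"
  assumes [measurable]: "f \<in> borel_measurable borel" and f0: "\<And>z. 0 \<le> f z"
  shows "(\<integral>\<^sup>+ r. indicator {0<..<1} r * emeasure lborel {z. r < f z} \<partial>lborel)
       = (\<integral>\<^sup>+ z. ennreal (min 1 (f z)) \<partial>lborel)"
proof -
  have "(\<integral>\<^sup>+ r. indicator {0<..<1} r * emeasure lborel {z. r < f z} \<partial>lborel)
      = (\<integral>\<^sup>+ r. (\<integral>\<^sup>+ z. indicator {0<..<1} r * indicator {z. r < f z} z \<partial>lborel) \<partial>lborel)"
    by (intro nn_integral_cong, subst nn_integral_cmult) auto
  also have "\<dots> = (\<integral>\<^sup>+ z. (\<integral>\<^sup>+ r. indicator {0<..<1} r * indicator {z. r < f z} z \<partial>lborel) \<partial>lborel)"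
    by (rule lborel_pair.Fubini') simp
  also have "\<dots> = (\<integral>\<^sup>+ z. (\<integral>\<^sup>+ r. indicator {0<..<min 1 (f z)} r \<partial>lborel) \<partial>lborel)"
    by (intro nn_integral_cong) (auto simp: indicator_def)
  also have "\<dots> = (\<integral>\<^sup>+ z. ennreal (min 1 (f z)) \<partial>lborel)"
    using f0 by (intro nn_integral_cong) simp
  finally show ?thesis .
qed

lemma borel_measurable_emeasure_superlevel:
  fixes f :: "real \<Rightarrow> real"
  assumes [measurable]: "f \<in> borel_measurable borel"
  shows "(\<lambda>r. emeasure lborel {z. r < f z}) \<in> borel_measurable borel"
proof -
  have "(\<lambda>r. emeasure lborel (Pair r -` {(r, z). r < f z})) \<in> borel_measurable lborel"
  proof (rule lborel.measurable_emeasure_Pair)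
    have "{(r, z). r < f z} = {x\<in>space (lborel \<Otimes>\<^sub>M lborel). fst x < f (snd x)}"
      by (auto simp: space_pair_measure)
    also have "\<dots> \<in> sets (lborel \<Otimes>\<^sub>M lborel)" by measurable
    finally show "{(r, z). r < f z} \<in> sets (lborel \<Otimes>\<^sub>M lborel)" .
  qed
  then show ?thesis by simp
qed

lemma prekopa_leindler_normalized:
  fixes f0 f1 h :: "real \<Rightarrow> real" and t :: real
  assumes [measurable]: "f0 \<in> borel_measurable borel" "f1 \<in> borel_measurable borel" "h \<in> borel_measurable borel"
    and nn: "\<And>z. 0 \<le> f0 z" "\<And>z. 0 \<le> f1 z" "\<And>z. 0 \<le> h z"
    and sd: "abs_antimono f0" "abs_antimono f1" "abs_antimono h"
    and one: "f0 0 = 1" "f1 0 = 1"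
    and t: "0 < t" "t < 1"
    and hyp: "\<And>z w. f0 z powr t * f1 w powr (1 - t) \<le> h (t * z + (1 - t) * w)"
  shows "ennreal t * (\<integral>\<^sup>+ z. f0 z \<partial>lborel) + ennreal (1 - t) * (\<integral>\<^sup>+ z. f1 z \<partial>lborel)
           \<le> (\<integral>\<^sup>+ z. h z \<partial>lborel)"
proof -
  have le1: "f0 z \<le> 1" "f1 z \<le> 1" for z
    using sd(1,2) one unfolding abs_antimono_def by (metis abs_ge_zero abs_zero)+
  have I0: "(\<integral>\<^sup>+ z. f0 z \<partial>lborel) = (\<integral>\<^sup>+ r. indicator {0<..<1} r * emeasure lborel {z. r < f0 z} \<partial>lborel)"
    using nn_integral_min_1_layer_cake[of f0] nn le1 by (simp add: min_absorb2)
  have I1: "(\<integral>\<^sup>+ z. f1 z \<partial>lborel) = (\<integral>\<^sup>+ r. indicator {0<..<1} r * emeasure lborel {z. r < f1 z} \<partial>lborel)"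
    using nn_integral_min_1_layer_cake[of f1] nn le1 by (simp add: min_absorb2)
  have Ih: "(\<integral>\<^sup>+ r. indicator {0<..<1} r * emeasure lborel {z. r < h z} \<partial>lborel) \<le> (\<integral>\<^sup>+ z. h z \<partial>lborel)"
    using nn_integral_min_1_layer_cake[of h] nn by (auto intro!: nn_integral_mono ennreal_leI)
  have lev: "ennreal t * emeasure lborel {z. r < f0 z} + ennreal (1 - t) * emeasure lborel {z. r < f1 z}
      \<le> emeasure lborel {z. r < h z}" if r: "0 < r" "r < 1" for r
  proof (rule brunn_minkowski_abs_down_closed)
    show "abs_down_closed {z. r < f0 z}" "abs_down_closed {z. r < f1 z}" "abs_down_closed {z. r < h z}"
      using sd unfolding abs_down_closed_def abs_antimono_def by (auto intro: less_le_trans)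
    show "{z. r < f0 z} \<in> sets borel" "{z. r < f1 z} \<in> sets borel" "{z. r < h z} \<in> sets borel"
      by simp_all
    show "0 \<in> {z. r < f0 z}" "0 \<in> {z. r < f1 z}" using one r by auto
    show "0 < t" "t < 1" by fact+
    fix z w assume z: "z \<in> {z. r < f0 z}" and w: "w \<in> {z. r < f1 z}"
    have "r = r powr t * r powr (1 - t)" using r by (simp add: powr_add[symmetric])
    also have "\<dots> < f0 z powr t * f1 w powr (1 - t)"
      using z w r t by (intro mult_strict_mono powr_less_mono2) auto
    also have "\<dots> \<le> h (t * z + (1 - t) * w)" by (rule hyp)
    finally show "t * z + (1 - t) * w \<in> {z. r < h z}" by simp
  qed
  have m0: "(\<lambda>r. indicator {0<..<1} r * emeasure lborel {z. r < f0 z}) \<in> borel_measurable borel"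
    using borel_measurable_emeasure_superlevel[of f0] by simp
  have m1: "(\<lambda>r. indicator {0<..<1} r * emeasure lborel {z. r < f1 z}) \<in> borel_measurable borel"
    using borel_measurable_emeasure_superlevel[of f1] by simp
  have "ennreal t * (\<integral>\<^sup>+ z. f0 z \<partial>lborel) + ennreal (1 - t) * (\<integral>\<^sup>+ z. f1 z \<partial>lborel)
      = (\<integral>\<^sup>+ r. ennreal t * (indicator {0<..<1} r * emeasure lborel {z. r < f0 z})
              + ennreal (1 - t) * (indicator {0<..<1} r * emeasure lborel {z. r < f1 z}) \<partial>lborel)"
    unfolding I0 I1 using m0 m1
    by (subst nn_integral_add) (auto simp: nn_integral_cmult)
  also have "\<dots> \<le> (\<integral>\<^sup>+ r. indicator {0<..<1} r * emeasure lborel {z. r < h z} \<partial>lborel)"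
  proof (rule nn_integral_mono)
    fix r show "ennreal t * (indicator {0<..<1} r * emeasure lborel {z. r < f0 z})
              + ennreal (1 - t) * (indicator {0<..<1} r * emeasure lborel {z. r < f1 z})
        \<le> indicator {0<..<1} r * emeasure lborel {z. r < h z}"
      using lev[of r] by (cases "r \<in> {0<..<1}") auto
  qed
  also have "\<dots> \<le> (\<integral>\<^sup>+ z. h z \<partial>lborel)" by (rule Ih)
  finally show ?thesis .
qed

lemma abs_antimono_pos_at_0:
  assumes "abs_antimono f" "\<And>z. 0 \<le> f z" "(\<integral>\<^sup>+ z. f z \<partial>lborel) \<noteq> 0"
  shows "0 < f 0"
proof (rule ccontr)
  assume "\<not> 0 < f 0"
  then have "f z = 0" for z
    using assms(1,2) unfolding abs_antimono_def by (metis abs_ge_zero abs_zero order_antisym not_less)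
  then show False using assms(3) by simp
qed

lemma nn_integral_divide_pos:
  fixes f :: "'a \<Rightarrow> real"
  assumes "f \<in> borel_measurable M" "0 < c"
  shows "(\<integral>\<^sup>+ z. f z / c \<partial>M) = (\<integral>\<^sup>+ z. f z \<partial>M) / ennreal c"
proof -
  have "(\<integral>\<^sup>+ z. f z / c \<partial>M) = (\<integral>\<^sup>+ z. ennreal (f z) / ennreal c \<partial>M)"
  proof (intro nn_integral_cong)
    fix z
    show "ennreal (f z / c) = ennreal (f z) / ennreal c"
      using assms(2) by (cases "0 \<le> f z") (auto simp: divide_ennreal ennreal_neg divide_nonpos_pos)
  qed
  also have "\<dots> = (\<integral>\<^sup>+ z. f z \<partial>M) / ennreal c"
    using assms(1) by (intro nn_integral_divide) simp
  finally show ?thesis .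
qed

lemma prekopa_leindler_abs_antimono:
  fixes f0 f1 h :: "real \<Rightarrow> real" and t A B :: real
  assumes [measurable]: "f0 \<in> borel_measurable borel" "f1 \<in> borel_measurable borel" "h \<in> borel_measurable borel"
    and nn: "\<And>z. 0 \<le> f0 z" "\<And>z. 0 \<le> f1 z" "\<And>z. 0 \<le> h z"
    and sd: "abs_antimono f0" "abs_antimono f1" "abs_antimono h"
    and t: "0 < t" "t < 1"
    and hyp: "\<And>z w. f0 z powr t * f1 w powr (1 - t) \<le> h (t * z + (1 - t) * w)"
    and IA: "(\<integral>\<^sup>+ z. f0 z \<partial>lborel) = ennreal A" "0 \<le> A"
    and IB: "(\<integral>\<^sup>+ z. f1 z \<partial>lborel) = ennreal B" "0 \<le> B"
  shows "ennreal (A powr t * B powr (1 - t)) \<le> (\<integral>\<^sup>+ z. h z \<partial>lborel)"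
proof (cases "A = 0 \<or> B = 0")
  case True
  then show ?thesis by auto
next
  case False
  then have A: "0 < A" and B: "0 < B" using IA IB by auto
  \<comment> \<open>Rescale to \<open>f0 0 = f1 0 = 1\<close>; weighted AM-GM then turns the arithmetic mean of the
    rescaled integrals into the geometric mean of the original ones.\<close>
  define M0 M1 where "M0 = f0 0" and "M1 = f1 0"
  have M0: "0 < M0" and M1: "0 < M1"
    unfolding M0_def M1_def using A B IA IB by (auto intro!: abs_antimono_pos_at_0 sd nn)
  define K where "K = M0 powr t * M1 powr (1 - t)"
  have K: "0 < K" unfolding K_def using M0 M1 by simp
  have "ennreal t * (\<integral>\<^sup>+ z. f0 z / M0 \<partial>lborel) + ennreal (1 - t) * (\<integral>\<^sup>+ z. f1 z / M1 \<partial>lborel)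
      \<le> (\<integral>\<^sup>+ z. h z / K \<partial>lborel)"
  proof (rule prekopa_leindler_normalized)
    show "abs_antimono (\<lambda>z. f0 z / M0)" "abs_antimono (\<lambda>z. f1 z / M1)" "abs_antimono (\<lambda>z. h z / K)"
      using sd M0 M1 K unfolding abs_antimono_def by (auto intro: divide_right_mono)
    fix z w
    have "(f0 z / M0) powr t * (f1 w / M1) powr (1 - t) = (f0 z powr t * f1 w powr (1 - t)) / K"
      unfolding K_def using nn M0 M1 by (simp add: powr_divide)
    also have "\<dots> \<le> h (t * z + (1 - t) * w) / K" using hyp K by (simp add: divide_right_mono)
    finally show "(f0 z / M0) powr t * (f1 w / M1) powr (1 - t) \<le> h (t * z + (1 - t) * w) / K" .
  qed (use nn M0 M1 K t in \<open>auto simp: M0_def M1_def\<close>)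
  then have mean_le: "ennreal (t * (A / M0) + (1 - t) * (B / M1)) \<le> (\<integral>\<^sup>+ z. h z \<partial>lborel) / ennreal K"
    using t A B M0 M1 K
    by (simp add: nn_integral_divide_pos IA IB divide_ennreal ennreal_mult ennreal_plus
        del: times_divide_eq_right)
  have "A powr t * B powr (1 - t) = K * ((A / M0) powr t * (B / M1) powr (1 - t))"
    unfolding K_def using M0 M1 A B by (simp add: powr_divide field_simps)
  also have "\<dots> \<le> K * (t * (A / M0) + (1 - t) * (B / M1))"
    using K t A B M0 M1 by (intro mult_left_mono Youngs_inequality_0) auto
  finally have "ennreal (A powr t * B powr (1 - t)) \<le> ennreal (K * (t * (A / M0) + (1 - t) * (B / M1)))"
    by (rule ennreal_leI)
  also have "\<dots> = ennreal K * ennreal (t * (A / M0) + (1 - t) * (B / M1))"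
    using K t A B M0 M1 by (intro ennreal_mult) auto
  also have "\<dots> \<le> ennreal K * ((\<integral>\<^sup>+ z. h z \<partial>lborel) / ennreal K)"
    using mean_le by (rule mult_left_mono) simp
  also have "\<dots> = (\<integral>\<^sup>+ z. h z \<partial>lborel)"
    using K by (simp add: ennreal_times_divide mult.commute[of "ennreal K"] ennreal_mult_divide_eq)
  finally show ?thesis .
qed

section \<open>Log-concave functions\<close>

definition log_concave :: "(real \<Rightarrow> real) \<Rightarrow> bool" where
  "log_concave g \<longleftrightarrow> (\<forall>x y t. 0 < t \<longrightarrow> t < 1 \<longrightarrow> g x powr t * g y powr (1 - t) \<le> g (t * x + (1 - t) * y))"

lemma log_concaveD:
  "log_concave g \<Longrightarrow> 0 < t \<Longrightarrow> t < 1 \<Longrightarrow> g x powr t * g y powr (1 - t) \<le> g (t * x + (1 - t) * y)"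
  unfolding log_concave_def by blast

lemma powr_mult_powr_one_minus: "0 \<le> (x::real) \<Longrightarrow> x powr t * x powr (1 - t) = x"
  by (cases "x = 0") (simp_all add: powr_add[symmetric])

lemma log_concave_mult_le:
  assumes lc: "log_concave g" and nn: "\<And>x. 0 \<le> g x"
    and abd: "a \<le> b" "b \<le> d" "a + d = b + c"
  shows "g a * g d \<le> g b * g c"
proof (cases "a = b \<or> b = d")
  case True
  then show ?thesis using abd by (auto simp: mult.commute)
next
  case False
  then have ab: "a < b" and bd: "b < d" using abd by auto
  define t where "t = (d - b) / (d - a)"
  have t: "0 < t" "t < 1" unfolding t_def using ab bd by (auto simp: field_simps)
  have "t * (d - a) = d - b" unfolding t_def using ab bd by simp
  then have b: "b = t * a + (1 - t) * d" by (simp add: algebra_simps)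
  have c: "c = (1 - t) * a + (1 - (1 - t)) * d" using abd b by (simp add: algebra_simps)
  have at_b: "g a powr t * g d powr (1 - t) \<le> g b"
    unfolding b by (rule log_concaveD[OF lc t])
  have at_c: "g a powr (1 - t) * g d powr (1 - (1 - t)) \<le> g c"
    unfolding c by (rule log_concaveD[OF lc]) (use t in auto)
  have "g a * g d = (g a powr t * g a powr (1 - t)) * (g d powr t * g d powr (1 - t))"
    using powr_mult_powr_one_minus[OF nn[of a], of t] powr_mult_powr_one_minus[OF nn[of d], of t] by simp
  also have "\<dots> = (g a powr t * g d powr (1 - t)) * (g a powr (1 - t) * g d powr (1 - (1 - t)))"
    by (simp add: algebra_simps)
  also have "\<dots> \<le> g b * g c" using at_b at_c by (intro mult_mono) (auto simp: nn)
  finally show ?thesis .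
qed

lemma log_concave_cross_nonneg:
  assumes lc: "log_concave g" and nn: "\<And>x. 0 \<le> g x" and st: "s \<le> t"
  shows "0 \<le> (p - q) * (g (t - p) * g (s - q) - g (t - q) * g (s - p))"
proof (cases "q \<le> p")
  case True
  have "g (s - p) * g (t - q) \<le> g (t - p) * g (s - q)"
    by (rule log_concave_mult_le[OF lc nn]) (use st True in auto)
  then show ?thesis using True by (simp add: mult.commute)
next
  case False
  have "g (s - q) * g (t - p) \<le> g (t - q) * g (s - p)"
    by (rule log_concave_mult_le[OF lc nn]) (use st False in auto)
  then show ?thesis using False by (simp add: mult.commute mult_nonpos_nonpos)
qed

lemma square_convex_comb_le:
  fixes t z w :: real
  assumes "0 \<le> t" "t \<le> 1"
  shows "(t * z + (1 - t) * w)\<^sup>2 \<le> t * z\<^sup>2 + (1 - t) * w\<^sup>2"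
proof -
  have "t * z\<^sup>2 + (1 - t) * w\<^sup>2 - (t * z + (1 - t) * w)\<^sup>2 = t * (1 - t) * (z - w)\<^sup>2"
    by (simp add: power2_eq_square algebra_simps)
  also have "\<dots> \<ge> 0" using assms by simp
  finally show ?thesis by simp
qed

definition gauss_dens :: "real \<Rightarrow> real \<Rightarrow> real" where
  "gauss_dens l y = inverse (sqrt l) * std_normal_density (inverse (sqrt l) * y)"

lemma gauss_dens_eq_normal_density: "0 < l \<Longrightarrow> gauss_dens l y = normal_density 0 (sqrt l) y"
  unfolding gauss_dens_def normal_density_def
  by (simp add: real_sqrt_mult power_mult_distrib divide_simps power2_eq_square)

lemma gauss_dens_nonneg: "0 < l \<Longrightarrow> 0 \<le> gauss_dens l y"
  by (simp add: gauss_dens_eq_normal_density normal_density_nonneg)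

lemma borel_measurable_gauss_dens[measurable]: "gauss_dens l \<in> borel_measurable borel"
  unfolding gauss_dens_def[abs_def] by measurable

lemma nn_integral_gauss_dens: "0 < l \<Longrightarrow> (\<integral>\<^sup>+ y. gauss_dens l y \<partial>lborel) = 1"
proof -
  assume l: "0 < l"
  interpret prob_space "density lborel (normal_density 0 (sqrt l))"
    by (rule prob_space_normal_density) (use l in simp)
  have "(\<integral>\<^sup>+ y. gauss_dens l y \<partial>lborel) = emeasure (density lborel (normal_density 0 (sqrt l))) UNIV"
    using l by (simp add: emeasure_density gauss_dens_eq_normal_density)
  also have "\<dots> = 1" using emeasure_space_1 by simp
  finally show ?thesis .
qed

lemma gauss_dens_exp:
  assumes "0 < l"
  shows "gauss_dens l y = exp (ln (1 / sqrt (2 * pi * l)) - y\<^sup>2 / (2 * l))"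
proof -
  have C: "0 < 1 / sqrt (2 * pi * l)" using assms by simp
  have "exp (ln (1 / sqrt (2 * pi * l)) - y\<^sup>2 / (2 * l)) = (1 / sqrt (2 * pi * l)) / exp (y\<^sup>2 / (2 * l))"
    by (simp only: exp_diff exp_ln[OF C])
  also have "\<dots> = normal_density 0 (sqrt l) y"
    using assms by (simp add: normal_density_def exp_minus inverse_eq_divide)
  finally show ?thesis using assms by (simp add: gauss_dens_eq_normal_density)
qed

lemma abs_antimono_gauss_dens: "0 < l \<Longrightarrow> abs_antimono (gauss_dens l)"
  unfolding abs_antimono_def
proof (intro allI impI)
  fix z w :: real assume l: "0 < l" and zw: "\<bar>z\<bar> \<le> \<bar>w\<bar>"
  have "z\<^sup>2 \<le> w\<^sup>2" using zw by (simp add: abs_le_square_iff)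
  then show "gauss_dens l w \<le> gauss_dens l z" using l by (simp add: gauss_dens_exp divide_right_mono)
qed

lemma log_concave_gauss_dens:
  assumes l: "0 < l"
  shows "log_concave (gauss_dens l)"
  unfolding log_concave_def
proof (intro allI impI)
  fix z w t :: real assume t: "0 < t" "t < 1"
  define C where "C = ln (1 / sqrt (2 * pi * l))"
  have "gauss_dens l z powr t * gauss_dens l w powr (1 - t)
      = exp (t * (C - z\<^sup>2 / (2 * l)) + (1 - t) * (C - w\<^sup>2 / (2 * l)))"
    using l by (simp add: gauss_dens_exp powr_def C_def exp_add)
  also have "\<dots> = exp (C - (t * z\<^sup>2 + (1 - t) * w\<^sup>2) / (2 * l))"
    by (simp add: algebra_simps add_divide_distrib diff_divide_distrib)
  also have "\<dots> \<le> exp (C - (t * z + (1 - t) * w)\<^sup>2 / (2 * l))"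
    using square_convex_comb_le[of t z w] t l by (simp add: divide_right_mono)
  also have "\<dots> = gauss_dens l (t * z + (1 - t) * w)"
    using l by (simp add: gauss_dens_exp C_def)
  finally show "gauss_dens l z powr t * gauss_dens l w powr (1 - t) \<le> gauss_dens l (t * z + (1 - t) * w)" .
qed

section \<open>The Gaussian mass of a ball\<close>

text \<open>For independent \<open>Z k \<sim> N(0, l k)\<close>, \<open>k \<in> I\<close>: \<open>gauss_ball_prob I l u\<close> is the probability that
  \<open>\<Sum>k\<in>I. (Z k)\<^sup>2 < u\<close>, and \<open>gauss_ball_moment I l j u\<close> the expectation of \<open>(Z j)\<^sup>2 / l j\<close> on that event.\<close>
definition gauss_ball_dens :: "'i set \<Rightarrow> ('i \<Rightarrow> real) \<Rightarrow> real \<Rightarrow> ('i \<Rightarrow> real) \<Rightarrow> real" where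
  "gauss_ball_dens I l u x = (if (\<Sum>k\<in>I. (x k)\<^sup>2) < u then (\<Prod>k\<in>I. gauss_dens (l k) (x k)) else 0)"

definition gauss_ball_nn :: "'i set \<Rightarrow> ('i \<Rightarrow> real) \<Rightarrow> real \<Rightarrow> ennreal" where
  "gauss_ball_nn I l u = (\<integral>\<^sup>+ x. ennreal (gauss_ball_dens I l u x) \<partial>PiM I (\<lambda>_. lborel))"

lemma borel_measurable_gauss_ball_dens[measurable]:
  "finite I \<Longrightarrow> gauss_ball_dens I l u \<in> borel_measurable (PiM I (\<lambda>_. lborel))"
  unfolding gauss_ball_dens_def[abs_def] by measurable

lemma gauss_ball_dens_nonneg: "(\<And>k. 0 < l k) \<Longrightarrow> 0 \<le> gauss_ball_dens I l u x"
  unfolding gauss_ball_dens_def by (auto intro!: prod_nonneg gauss_dens_nonneg)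

interpretation lborel_product: product_sigma_finite "\<lambda>_. lborel :: real measure"
  by standard

lemma gauss_ball_dens_insert:
  assumes "finite I" "k \<notin> I"
  shows "gauss_ball_dens (insert k I) l u (x(k := y)) = gauss_dens (l k) y * gauss_ball_dens I l (u - y\<^sup>2) x"
proof -
  have s0: "(\<Sum>j\<in>I. ((x(k := y)) j)\<^sup>2) = (\<Sum>j\<in>I. (x j)\<^sup>2)"
    using assms by (intro sum.cong) auto
  have p0: "(\<Prod>j\<in>I. gauss_dens (l j) ((x(k := y)) j)) = (\<Prod>j\<in>I. gauss_dens (l j) (x j))"
    using assms by (intro prod.cong) auto
  have s: "(\<Sum>j\<in>insert k I. ((x(k := y)) j)\<^sup>2) = y\<^sup>2 + (\<Sum>j\<in>I. (x j)\<^sup>2)"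
    using assms s0 by (simp add: sum.insert)
  have p: "(\<Prod>j\<in>insert k I. gauss_dens (l j) ((x(k := y)) j)) = gauss_dens (l k) y * (\<Prod>j\<in>I. gauss_dens (l j) (x j))"
    using assms p0 by (simp add: prod.insert)
  show ?thesis unfolding gauss_ball_dens_def s p by auto
qed

lemma gauss_ball_nn_insert:
  assumes I: "finite I" "k \<notin> I" and l: "\<And>k. 0 < l k"
  shows "gauss_ball_nn (insert k I) l u = (\<integral>\<^sup>+ y. ennreal (gauss_dens (l k) y) * gauss_ball_nn I l (u - y\<^sup>2) \<partial>lborel)"
proof -
  have "gauss_ball_nn (insert k I) l u = (\<integral>\<^sup>+ y. (\<integral>\<^sup>+ x. ennreal (gauss_ball_dens (insert k I) l u (x(k := y))) \<partial>PiM I (\<lambda>_. lborel)) \<partial>lborel)"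
    unfolding gauss_ball_nn_def using I by (subst lborel_product.product_nn_integral_insert_rev) auto
  also have "\<dots> = (\<integral>\<^sup>+ y. (\<integral>\<^sup>+ x. ennreal (gauss_dens (l k) y) * ennreal (gauss_ball_dens I l (u - y\<^sup>2) x) \<partial>PiM I (\<lambda>_. lborel)) \<partial>lborel)"
    using I l by (intro nn_integral_cong) (simp add: gauss_ball_dens_insert ennreal_mult gauss_dens_nonneg gauss_ball_dens_nonneg)
  also have "\<dots> = (\<integral>\<^sup>+ y. ennreal (gauss_dens (l k) y) * gauss_ball_nn I l (u - y\<^sup>2) \<partial>lborel)"
    unfolding gauss_ball_nn_def using I by (intro nn_integral_cong) (simp add: nn_integral_cmult)
  finally show ?thesis .
qed

lemma gauss_ball_nn_empty: "gauss_ball_nn {} l u = (if 0 < u then 1 else 0)"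
  unfolding gauss_ball_nn_def gauss_ball_dens_def by (simp add: PiM_empty nn_integral_count_space_finite)

lemma gauss_ball_nn_mono: "(\<And>k. 0 < l k) \<Longrightarrow> u \<le> v \<Longrightarrow> gauss_ball_nn I l u \<le> gauss_ball_nn I l v"
  unfolding gauss_ball_nn_def gauss_ball_dens_def by (intro nn_integral_mono) (auto intro!: prod_nonneg gauss_dens_nonneg)

lemma gauss_ball_nn_le_1:
  assumes "finite I" "\<And>k. 0 < l k"
  shows "gauss_ball_nn I l u \<le> 1"
  using assms(1)
proof (induction I arbitrary: u rule: finite_induct)
  case empty then show ?case by (simp add: gauss_ball_nn_empty)
next
  case (insert k I)
  have "gauss_ball_nn (insert k I) l u = (\<integral>\<^sup>+ y. ennreal (gauss_dens (l k) y) * gauss_ball_nn I l (u - y\<^sup>2) \<partial>lborel)"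
    using insert assms by (intro gauss_ball_nn_insert) auto
  also have "\<dots> \<le> (\<integral>\<^sup>+ y. ennreal (gauss_dens (l k) y) \<partial>lborel)"
    using insert.IH by (intro nn_integral_mono) (simp add: mult_left_le)
  also have "\<dots> = 1" using nn_integral_gauss_dens assms(2) by simp
  finally show ?case .
qed

definition gauss_ball_prob :: "'i set \<Rightarrow> ('i \<Rightarrow> real) \<Rightarrow> real \<Rightarrow> real" where
  "gauss_ball_prob I l u = enn2real (gauss_ball_nn I l u)"

lemma gauss_ball_nn_eq_prob: "finite I \<Longrightarrow> (\<And>k. 0 < l k) \<Longrightarrow> gauss_ball_nn I l u = ennreal (gauss_ball_prob I l u)"
  unfolding gauss_ball_prob_def using gauss_ball_nn_le_1[of I l u] by (simp add: ennreal_enn2real_if top_unique)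
    (metis ennreal_enn2real ennreal_one_less_top order_le_less_trans less_top)

lemma gauss_ball_prob_nonneg: "0 \<le> gauss_ball_prob I l u" unfolding gauss_ball_prob_def by simp

lemma gauss_ball_prob_mono: "finite I \<Longrightarrow> (\<And>k. 0 < l k) \<Longrightarrow> u \<le> v \<Longrightarrow> gauss_ball_prob I l u \<le> gauss_ball_prob I l v"
  using gauss_ball_nn_mono[of l u v I] gauss_ball_nn_eq_prob[of I l] by (simp add: gauss_ball_prob_nonneg)

lemma borel_measurable_gauss_ball_prob[measurable]: "finite I \<Longrightarrow> (\<And>k. 0 < l k) \<Longrightarrow> gauss_ball_prob I l \<in> borel_measurable borel"
  by (rule borel_measurable_mono) (auto simp: mono_def gauss_ball_prob_mono)

lemma gauss_ball_prob_empty: "gauss_ball_prob {} l u = (if 0 < u then 1 else 0)"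
  unfolding gauss_ball_prob_def by (simp add: gauss_ball_nn_empty)

lemma nn_integral_gauss_ball_prob_insert:
  assumes "finite I" "k \<notin> I" "\<And>k. 0 < l k"
  shows "(\<integral>\<^sup>+ z. ennreal (gauss_dens (l k) z * gauss_ball_prob I l (u - z\<^sup>2)) \<partial>lborel) = ennreal (gauss_ball_prob (insert k I) l u)"
proof -
  have "(\<integral>\<^sup>+ z. ennreal (gauss_dens (l k) z * gauss_ball_prob I l (u - z\<^sup>2)) \<partial>lborel) = gauss_ball_nn (insert k I) l u"
    using assms by (subst gauss_ball_nn_insert) (auto intro!: nn_integral_cong simp: gauss_ball_nn_eq_prob ennreal_mult gauss_dens_nonneg gauss_ball_prob_nonneg)
  also have "\<dots> = ennreal (gauss_ball_prob (insert k I) l u)" using assms by (intro gauss_ball_nn_eq_prob) auto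
  finally show ?thesis .
qed

lemma log_concave_nn_integral_gauss_shift:
  fixes g G :: "real \<Rightarrow> real"
  assumes l: "0 < l" and lc: "log_concave g" and g_mono: "mono g" and g_nn: "\<And>u. 0 \<le> g u"
    and [measurable]: "g \<in> borel_measurable borel"
    and G: "\<And>u. (\<integral>\<^sup>+ z. ennreal (gauss_dens l z * g (u - z\<^sup>2)) \<partial>lborel) = ennreal (G u)"
    and G_nn: "\<And>u. 0 \<le> G u"
  shows "log_concave G"
  unfolding log_concave_def
proof (intro allI impI)
  fix x y t :: real assume t: "0 < t" "t < 1"
  have sd: "abs_antimono (\<lambda>z. gauss_dens l z * g (u - z\<^sup>2))" for u
    unfolding abs_antimono_def
  proof (intro allI impI)
    fix z w :: real assume zw: "\<bar>z\<bar> \<le> \<bar>w\<bar>"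
    have "g (u - w\<^sup>2) \<le> g (u - z\<^sup>2)"
      using zw by (intro monoD[OF g_mono]) (simp add: abs_le_square_iff)
    moreover have "gauss_dens l w \<le> gauss_dens l z"
      using abs_antimono_gauss_dens[OF l] zw unfolding abs_antimono_def by blast
    ultimately show "gauss_dens l w * g (u - w\<^sup>2) \<le> gauss_dens l z * g (u - z\<^sup>2)"
      by (intro mult_mono) (auto simp: g_nn gauss_dens_nonneg[OF l])
  qed
  have "ennreal (G x powr t * G y powr (1 - t))
      \<le> (\<integral>\<^sup>+ z. ennreal (gauss_dens l z * g (t * x + (1 - t) * y - z\<^sup>2)) \<partial>lborel)"
  proof (rule prekopa_leindler_abs_antimono[OF _ _ _ _ _ _ sd sd sd t _ G G_nn G G_nn])
    fix z w :: real
    define v where "v = t * z + (1 - t) * w"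
    have "(gauss_dens l z * g (x - z\<^sup>2)) powr t * (gauss_dens l w * g (y - w\<^sup>2)) powr (1 - t)
        = (gauss_dens l z powr t * gauss_dens l w powr (1 - t)) * (g (x - z\<^sup>2) powr t * g (y - w\<^sup>2) powr (1 - t))"
      using l by (simp add: powr_mult gauss_dens_nonneg g_nn)
    also have "\<dots> \<le> gauss_dens l v * g (t * (x - z\<^sup>2) + (1 - t) * (y - w\<^sup>2))"
      unfolding v_def
      by (intro mult_mono log_concaveD[OF log_concave_gauss_dens[OF l] t] log_concaveD[OF lc t])
        (auto simp: gauss_dens_nonneg[OF l])
    also have "\<dots> \<le> gauss_dens l v * g (t * x + (1 - t) * y - v\<^sup>2)"
    proof (intro mult_left_mono monoD[OF g_mono])
      have "v\<^sup>2 \<le> t * z\<^sup>2 + (1 - t) * w\<^sup>2" unfolding v_def using t by (intro square_convex_comb_le) auto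
      then show "t * (x - z\<^sup>2) + (1 - t) * (y - w\<^sup>2) \<le> t * x + (1 - t) * y - v\<^sup>2"
        by (simp add: algebra_simps)
    qed (simp add: gauss_dens_nonneg[OF l])
    finally show "(gauss_dens l z * g (x - z\<^sup>2)) powr t * (gauss_dens l w * g (y - w\<^sup>2)) powr (1 - t)
        \<le> gauss_dens l (t * z + (1 - t) * w) * g (t * x + (1 - t) * y - (t * z + (1 - t) * w)\<^sup>2)"
      unfolding v_def .
  qed (auto intro!: mult_nonneg_nonneg simp: gauss_dens_nonneg[OF l] g_nn)
  also have "\<dots> = ennreal (G (t * x + (1 - t) * y))" by (rule G)
  finally show "G x powr t * G y powr (1 - t) \<le> G (t * x + (1 - t) * y)"
    by (simp add: ennreal_le_iff G_nn)
qed

lemma log_concave_gauss_ball_prob: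
  assumes "finite I" "\<And>k. 0 < l k"
  shows "log_concave (gauss_ball_prob I l)"
  using assms(1)
proof (induction I rule: finite_induct)
  case empty
  have "(if 0 < x then 1 else 0) powr t * (if 0 < y then 1 else 0) powr (1 - t)
          \<le> (if 0 < t * x + (1 - t) * y then 1 else (0::real))" if "0 < t" "t < 1" for x y t :: real
    using that by (auto intro: add_pos_pos)
  then show ?case unfolding log_concave_def gauss_ball_prob_empty by blast
next
  case (insert k I)
  show ?case
  proof (rule log_concave_nn_integral_gauss_shift)
    show "mono (gauss_ball_prob I l)" using insert assms(2) by (intro monoI gauss_ball_prob_mono) auto
    show "(\<integral>\<^sup>+ z. ennreal (gauss_dens (l k) z * gauss_ball_prob I l (u - z\<^sup>2)) \<partial>lborel)
        = ennreal (gauss_ball_prob (insert k I) l u)" for u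
      using insert assms(2) by (intro nn_integral_gauss_ball_prob_insert) auto
  qed (use insert assms(2) in \<open>auto simp: gauss_ball_prob_nonneg\<close>)
qed

section \<open>Monotonicity of the conditional mean\<close>

lemma nn_integral_mult_nn_integral:
  fixes F H :: "real \<Rightarrow> real"
  assumes [measurable]: "F \<in> borel_measurable borel" "H \<in> borel_measurable borel"
    and nn: "\<And>z. 0 \<le> F z" "\<And>z. 0 \<le> H z"
  shows "(\<integral>\<^sup>+ z. ennreal (F z) \<partial>lborel) * (\<integral>\<^sup>+ w. ennreal (H w) \<partial>lborel)
       = (\<integral>\<^sup>+ z. (\<integral>\<^sup>+ w. ennreal (F z * H w) \<partial>lborel) \<partial>lborel)"
proof -
  have "(\<integral>\<^sup>+ z. ennreal (F z) \<partial>lborel) * (\<integral>\<^sup>+ w. ennreal (H w) \<partial>lborel)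
      = (\<integral>\<^sup>+ z. ennreal (F z) * (\<integral>\<^sup>+ w. ennreal (H w) \<partial>lborel) \<partial>lborel)"
    by (rule nn_integral_multc[symmetric]) simp
  also have "\<dots> = (\<integral>\<^sup>+ z. (\<integral>\<^sup>+ w. ennreal (F z) * ennreal (H w) \<partial>lborel) \<partial>lborel)"
    by (intro nn_integral_cong nn_integral_cmult[symmetric]) simp
  also have "\<dots> = (\<integral>\<^sup>+ z. (\<integral>\<^sup>+ w. ennreal (F z * H w) \<partial>lborel) \<partial>lborel)"
    using nn by (intro nn_integral_cong) (simp add: ennreal_mult)
  finally show ?thesis .
qed

lemma nn_integral_le_by_symmetrisation:
  fixes ps ph :: "real \<Rightarrow> real \<Rightarrow> real"
  assumes [measurable]: "(\<lambda>p. ps (fst p) (snd p)) \<in> borel_measurable (lborel \<Otimes>\<^sub>M lborel)"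
    "(\<lambda>p. ph (fst p) (snd p)) \<in> borel_measurable (lborel \<Otimes>\<^sub>M lborel)"
    and nn: "\<And>z w. 0 \<le> ps z w" "\<And>z w. 0 \<le> ph z w"
    and pw: "\<And>z w. ps z w + ps w z \<le> ph z w + ph w z"
  shows "(\<integral>\<^sup>+ z. (\<integral>\<^sup>+ w. ennreal (ps z w) \<partial>lborel) \<partial>lborel) \<le> (\<integral>\<^sup>+ z. (\<integral>\<^sup>+ w. ennreal (ph z w) \<partial>lborel) \<partial>lborel)"
proof -
  have mps: "(\<lambda>(z, w). ps z w) \<in> borel_measurable (lborel \<Otimes>\<^sub>M lborel)" using assms(1) by (simp add: case_prod_beta')
  have mph: "(\<lambda>(z, w). ph z w) \<in> borel_measurable (lborel \<Otimes>\<^sub>M lborel)" using assms(2) by (simp add: case_prod_beta')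
  have [measurable]: "(\<lambda>(z, w). ps w z) \<in> borel_measurable (lborel \<Otimes>\<^sub>M lborel)"
    using measurable_comp[OF measurable_pair_swap' mps] by (simp add: comp_def case_prod_beta')
  have [measurable]: "(\<lambda>(z, w). ph w z) \<in> borel_measurable (lborel \<Otimes>\<^sub>M lborel)"
    using measurable_comp[OF measurable_pair_swap' mph] by (simp add: comp_def case_prod_beta')
  note mps[measurable] mph[measurable]
  define J where "J F = (\<integral>\<^sup>+ z. (\<integral>\<^sup>+ w. ennreal (F z w) \<partial>lborel) \<partial>lborel)" for F :: "real \<Rightarrow> real \<Rightarrow> real"
  have swp: "J ps = J (\<lambda>z w. ps w z)" "J ph = J (\<lambda>z w. ph w z)"
    unfolding J_def by (rule lborel_pair.Fubini'[symmetric], simp)+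
  have add: "J F + J F' = J (\<lambda>z w. F z w + F' z w)"
    if [measurable]: "(\<lambda>(z, w). F z w) \<in> borel_measurable (lborel \<Otimes>\<^sub>M lborel)"
      "(\<lambda>(z, w). F' z w) \<in> borel_measurable (lborel \<Otimes>\<^sub>M lborel)"
      and "\<And>z w. 0 \<le> F z w" "\<And>z w. 0 \<le> F' z w" for F F'
  proof -
    have "J F + J F' = (\<integral>\<^sup>+ z. (\<integral>\<^sup>+ w. ennreal (F z w) \<partial>lborel) + (\<integral>\<^sup>+ w. ennreal (F' z w) \<partial>lborel) \<partial>lborel)"
      unfolding J_def by (rule nn_integral_add[symmetric]) simp_all
    also have "\<dots> = J (\<lambda>z w. F z w + F' z w)"
      unfolding J_def using that(3,4)
      by (intro nn_integral_cong) (simp add: nn_integral_add[symmetric] ennreal_plus)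
    finally show ?thesis .
  qed
  have "2 * J ps = J ps + J (\<lambda>z w. ps w z)" using swp by (simp add: mult_2)
  also have "\<dots> = J (\<lambda>z w. ps z w + ps w z)" by (rule add) (simp_all add: nn)
  also have "\<dots> \<le> J (\<lambda>z w. ph z w + ph w z)" unfolding J_def
    by (intro nn_integral_mono ennreal_leI pw)
  also have "\<dots> = J ph + J (\<lambda>z w. ph w z)" by (rule add[symmetric]) (simp_all add: nn)
  also have "\<dots> = 2 * J ph" using swp by (simp add: mult_2)
  finally have "2 * J ps \<le> 2 * J ph" .
  then show ?thesis unfolding J_def by (subst (asm) ennreal_mult_le_mult_iff) auto
qed

lemma log_concave_moment_cross_le:
  fixes a g :: "real \<Rightarrow> real"
  assumes lc: "log_concave g" and g_nn: "\<And>x. 0 \<le> g x" and [measurable]: "g \<in> borel_measurable borel"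
    and a_nn: "\<And>x. 0 \<le> a x" and [measurable]: "a \<in> borel_measurable borel"
    and c: "0 < c" and st: "s \<le> t"
  shows "(\<integral>\<^sup>+ z. ennreal (a z * (z\<^sup>2 / c) * g (s - z\<^sup>2)) \<partial>lborel) * (\<integral>\<^sup>+ w. ennreal (a w * g (t - w\<^sup>2)) \<partial>lborel)
    \<le> (\<integral>\<^sup>+ z. ennreal (a z * (z\<^sup>2 / c) * g (t - z\<^sup>2)) \<partial>lborel) * (\<integral>\<^sup>+ w. ennreal (a w * g (s - w\<^sup>2)) \<partial>lborel)"
proof -
  have nn1: "0 \<le> a z * (z\<^sup>2 / c) * g (u - z\<^sup>2)" and nn2: "0 \<le> a z * g (u - z\<^sup>2)" for z u
    using a_nn g_nn c by (simp_all add: mult_nonneg_nonneg)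
  have "(\<integral>\<^sup>+ z. ennreal (a z * (z\<^sup>2 / c) * g (s - z\<^sup>2)) \<partial>lborel) * (\<integral>\<^sup>+ w. ennreal (a w * g (t - w\<^sup>2)) \<partial>lborel)
      = (\<integral>\<^sup>+ z. (\<integral>\<^sup>+ w. ennreal ((a z * (z\<^sup>2 / c) * g (s - z\<^sup>2)) * (a w * g (t - w\<^sup>2))) \<partial>lborel) \<partial>lborel)"
    by (rule nn_integral_mult_nn_integral) (simp_all only: nn1 nn2, simp_all)
  also have "\<dots> \<le> (\<integral>\<^sup>+ z. (\<integral>\<^sup>+ w. ennreal ((a z * (z\<^sup>2 / c) * g (t - z\<^sup>2)) * (a w * g (s - w\<^sup>2))) \<partial>lborel) \<partial>lborel)"
  proof (rule nn_integral_le_by_symmetrisation)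
    fix z w
    have "0 \<le> a z * a w / c * ((z\<^sup>2 - w\<^sup>2) * (g (t - z\<^sup>2) * g (s - w\<^sup>2) - g (t - w\<^sup>2) * g (s - z\<^sup>2)))"
      using a_nn c log_concave_cross_nonneg[OF lc g_nn st] by simp
    then show "a z * (z\<^sup>2 / c) * g (s - z\<^sup>2) * (a w * g (t - w\<^sup>2)) + a w * (w\<^sup>2 / c) * g (s - w\<^sup>2) * (a z * g (t - z\<^sup>2))
       \<le> a z * (z\<^sup>2 / c) * g (t - z\<^sup>2) * (a w * g (s - w\<^sup>2)) + a w * (w\<^sup>2 / c) * g (t - w\<^sup>2) * (a z * g (s - z\<^sup>2))"
      by (simp add: algebra_simps add_divide_distrib diff_divide_distrib)
  qed (use nn1 nn2 in \<open>auto intro!: mult_nonneg_nonneg simp del: times_divide_eq_right times_divide_eq_left\<close>)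
  also have "\<dots> = (\<integral>\<^sup>+ z. ennreal (a z * (z\<^sup>2 / c) * g (t - z\<^sup>2)) \<partial>lborel) * (\<integral>\<^sup>+ w. ennreal (a w * g (s - w\<^sup>2)) \<partial>lborel)"
    by (rule nn_integral_mult_nn_integral[symmetric]) (simp_all only: nn1 nn2, simp_all)
  finally show ?thesis .
qed

definition gauss_ball_moment :: "'i set \<Rightarrow> ('i \<Rightarrow> real) \<Rightarrow> 'i \<Rightarrow> real \<Rightarrow> ennreal" where
  "gauss_ball_moment I l j s = (\<integral>\<^sup>+ x. ennreal (gauss_ball_dens I l s x * ((x j)\<^sup>2 / l j)) \<partial>PiM I (\<lambda>_. lborel))"

lemma gauss_ball_moment_insert:
  assumes I: "finite I" "j \<notin> I" and l: "\<And>k. 0 < l k"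
  shows "gauss_ball_moment (insert j I) l j s
    = (\<integral>\<^sup>+ z. ennreal (gauss_dens (l j) z * (z\<^sup>2 / l j) * gauss_ball_prob I l (s - z\<^sup>2)) \<partial>lborel)"
proof -
  have "gauss_ball_moment (insert j I) l j s = (\<integral>\<^sup>+ z. (\<integral>\<^sup>+ x.
      ennreal (gauss_ball_dens (insert j I) l s (x(j := z)) * ((x(j := z)) j)\<^sup>2 / l j) \<partial>PiM I (\<lambda>_. lborel)) \<partial>lborel)"
    unfolding gauss_ball_moment_def using I by (subst lborel_product.product_nn_integral_insert_rev) auto
  also have "\<dots> = (\<integral>\<^sup>+ z. (\<integral>\<^sup>+ x. ennreal (gauss_dens (l j) z * (z\<^sup>2 / l j)) * ennreal (gauss_ball_dens I l (s - z\<^sup>2) x)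
      \<partial>PiM I (\<lambda>_. lborel)) \<partial>lborel)"
    using I l by (intro nn_integral_cong, subst ennreal_mult[symmetric])
      (auto simp: gauss_ball_dens_insert gauss_dens_nonneg gauss_ball_dens_nonneg less_imp_le mult_ac)
  also have "\<dots> = (\<integral>\<^sup>+ z. ennreal (gauss_dens (l j) z * (z\<^sup>2 / l j)) * gauss_ball_nn I l (s - z\<^sup>2) \<partial>lborel)"
    unfolding gauss_ball_nn_def using I by (intro nn_integral_cong) (simp add: nn_integral_cmult)
  also have "\<dots> = (\<integral>\<^sup>+ z. ennreal (gauss_dens (l j) z * (z\<^sup>2 / l j) * gauss_ball_prob I l (s - z\<^sup>2)) \<partial>lborel)"
    unfolding gauss_ball_nn_eq_prob[OF I(1) l] using l
    by (intro nn_integral_cong, subst ennreal_mult[symmetric])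
      (auto simp: gauss_dens_nonneg gauss_ball_prob_nonneg less_imp_le)
  finally show ?thesis .
qed

lemma gauss_ball_moment_cross_le:
  assumes R: "finite R" "j \<notin> R" and l: "\<And>k. 0 < l k" and st: "s \<le> t"
  shows "gauss_ball_moment (insert j R) l j s * gauss_ball_nn (insert j R) l t
    \<le> gauss_ball_moment (insert j R) l j t * gauss_ball_nn (insert j R) l s"
proof -
  have nn: "gauss_ball_nn (insert j R) l u = (\<integral>\<^sup>+ z. ennreal (gauss_dens (l j) z * gauss_ball_prob R l (u - z\<^sup>2)) \<partial>lborel)" for u
    using R l by (simp add: nn_integral_gauss_ball_prob_insert gauss_ball_nn_eq_prob)
  show ?thesis
    unfolding nn gauss_ball_moment_insert[OF R l]
    using R l st by (intro log_concave_moment_cross_le log_concave_gauss_ball_prob)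
      (auto simp: gauss_ball_prob_nonneg gauss_dens_nonneg)
qed

lemma gauss_ball_moment_le:
  assumes I: "finite I" "j \<in> I" and l: "\<And>k. 0 < l k"
  shows "gauss_ball_moment I l j s \<le> ennreal (\<bar>s\<bar> / l j) * gauss_ball_nn I l s"
proof -
  have "gauss_ball_moment I l j s \<le> (\<integral>\<^sup>+ x. ennreal (\<bar>s\<bar> / l j) * ennreal (gauss_ball_dens I l s x) \<partial>PiM I (\<lambda>_. lborel))"
    unfolding gauss_ball_moment_def
  proof (intro nn_integral_mono)
    fix x
    have qn: "0 \<le> gauss_ball_dens I l s x" using gauss_ball_dens_nonneg l by blast
    have "gauss_ball_dens I l s x * ((x j)\<^sup>2 / l j) \<le> \<bar>s\<bar> / l j * gauss_ball_dens I l s x"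
    proof (cases "(\<Sum>k\<in>I. (x k)\<^sup>2) < s")
      case True
      have "(x j)\<^sup>2 \<le> (\<Sum>k\<in>I. (x k)\<^sup>2)" using I by (intro member_le_sum) auto
      then have "(x j)\<^sup>2 \<le> \<bar>s\<bar>" using True by linarith
      then have "(x j)\<^sup>2 / l j \<le> \<bar>s\<bar> / l j" using l[of j] by (simp add: divide_right_mono)
      then have "gauss_ball_dens I l s x * ((x j)\<^sup>2 / l j) \<le> gauss_ball_dens I l s x * (\<bar>s\<bar> / l j)"
        using qn by (rule mult_left_mono)
      then show ?thesis by (simp only: mult.commute)
    next
      case False
      then show ?thesis by (simp add: gauss_ball_dens_def)
    qed
    then show "ennreal (gauss_ball_dens I l s x * ((x j)\<^sup>2 / l j)) \<le> ennreal (\<bar>s\<bar> / l j) * ennreal (gauss_ball_dens I l s x)"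
      using l[of j] qn by (simp add: ennreal_mult[symmetric] ennreal_leI del: times_divide_eq_left)
  qed
  also have "\<dots> = ennreal (\<bar>s\<bar> / l j) * gauss_ball_nn I l s"
    unfolding gauss_ball_nn_def using I by (simp add: nn_integral_cmult)
  finally show ?thesis .
qed

text \<open>Where the ball has probability \<open>0\<close>, division by zero makes the conditional mean \<open>0\<close>.\<close>
definition gauss_ball_cond_mean :: "'i set \<Rightarrow> ('i \<Rightarrow> real) \<Rightarrow> 'i \<Rightarrow> real \<Rightarrow> real" where
  "gauss_ball_cond_mean I l j s = enn2real (gauss_ball_moment I l j s) / gauss_ball_prob I l s"

lemma gauss_ball_moment_finite:
  assumes "finite I" "j \<in> I" "\<And>k. 0 < l k"
  shows "gauss_ball_moment I l j s = ennreal (enn2real (gauss_ball_moment I l j s))"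
proof -
  have "gauss_ball_moment I l j s \<le> ennreal (\<bar>s\<bar> / l j) * gauss_ball_nn I l s" by (rule gauss_ball_moment_le[OF assms])
  also have "\<dots> \<le> ennreal (\<bar>s\<bar> / l j) * 1" by (intro mult_left_mono gauss_ball_nn_le_1) (use assms in auto)
  finally have "gauss_ball_moment I l j s < top" by (simp add: le_less_trans)
  then show ?thesis by simp
qed

lemma gauss_ball_cond_mean_nonneg: "0 \<le> gauss_ball_cond_mean I l j s"
  unfolding gauss_ball_cond_mean_def by (simp add: gauss_ball_prob_nonneg)

lemma gauss_ball_cond_mean_mult:
  assumes I: "finite I" "j \<in> I" and l: "\<And>k. 0 < l k"
  shows "ennreal (gauss_ball_cond_mean I l j s) * gauss_ball_nn I l s = gauss_ball_moment I l j s"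
proof (cases "gauss_ball_prob I l s = 0")
  case True
  then have F0: "gauss_ball_nn I l s = 0" using gauss_ball_nn_eq_prob[of I l, OF I(1) l] by simp
  have "gauss_ball_moment I l j s \<le> ennreal (\<bar>s\<bar> / l j) * gauss_ball_nn I l s" by (rule gauss_ball_moment_le[OF I l])
  then have "gauss_ball_moment I l j s = 0" using F0 by simp
  then show ?thesis using F0 by simp
next
  case False
  then have Gp: "0 < gauss_ball_prob I l s" using gauss_ball_prob_nonneg[of I l s] by simp
  have "ennreal (gauss_ball_cond_mean I l j s) * gauss_ball_nn I l s = ennreal (gauss_ball_cond_mean I l j s * gauss_ball_prob I l s)"
    unfolding gauss_ball_nn_eq_prob[of I l, OF I(1) l] by (rule ennreal_mult[symmetric, OF gauss_ball_cond_mean_nonneg gauss_ball_prob_nonneg])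
  also have "gauss_ball_cond_mean I l j s * gauss_ball_prob I l s = enn2real (gauss_ball_moment I l j s)" unfolding gauss_ball_cond_mean_def using Gp by simp
  also have "ennreal \<dots> = gauss_ball_moment I l j s" using gauss_ball_moment_finite[of I j l, OF I l] by simp
  finally show ?thesis .
qed

lemma gauss_ball_cond_mean_mono:
  assumes I: "finite I" "j \<in> I" and l: "\<And>k. 0 < l k" and st: "s \<le> t"
  shows "gauss_ball_cond_mean I l j s \<le> gauss_ball_cond_mean I l j t"
proof (cases "gauss_ball_prob I l s = 0")
  case True
  then show ?thesis using gauss_ball_cond_mean_nonneg[of I l j t] unfolding gauss_ball_cond_mean_def by simp
next
  case False
  then have Gs: "0 < gauss_ball_prob I l s" using gauss_ball_prob_nonneg[of I l s] by simp
  have Gt: "0 < gauss_ball_prob I l t" using Gs gauss_ball_prob_mono[of I l s t, OF I(1) l st] by simp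
  define R where "R = I - {j}"
  have IR: "I = insert j R" "finite R" "j \<notin> R" unfolding R_def using I by auto
  have "gauss_ball_moment I l j s * gauss_ball_nn I l t \<le> gauss_ball_moment I l j t * gauss_ball_nn I l s"
    unfolding IR(1) by (rule gauss_ball_moment_cross_le[OF IR(2,3) l st])
  then have "ennreal (enn2real (gauss_ball_moment I l j s) * gauss_ball_prob I l t)
      \<le> ennreal (enn2real (gauss_ball_moment I l j t) * gauss_ball_prob I l s)"
    using gauss_ball_moment_finite[OF I l] gauss_ball_nn_eq_prob[OF I(1) l]
    by (simp add: ennreal_mult gauss_ball_prob_nonneg)
  then have "enn2real (gauss_ball_moment I l j s) * gauss_ball_prob I l t
      \<le> enn2real (gauss_ball_moment I l j t) * gauss_ball_prob I l s"
    by (simp add: ennreal_le_iff gauss_ball_prob_nonneg)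
  then show ?thesis unfolding gauss_ball_cond_mean_def using Gs Gt by (simp add: divide_simps)
qed

lemma sum_Basis_scaleR_nth: "(\<Sum>b\<in>Basis. f b *\<^sub>R b :: real^'n) $ k = f (axis k 1)"
proof -
  have ak: "(axis k 1 :: real^'n) \<in> Basis" by simp
  have "(\<Sum>b\<in>Basis. f b *\<^sub>R b :: real^'n) $ k = (\<Sum>b\<in>Basis. f b *\<^sub>R b :: real^'n) \<bullet> axis k 1"
    by (simp add: inner_axis)
  also have "\<dots> = (\<Sum>b\<in>Basis. f b * (b \<bullet> (axis k 1 :: real^'n)))"
    by (simp add: inner_sum_left)
  also have "\<dots> = (\<Sum>b\<in>Basis. if b = axis k 1 then f b else 0)"
    using ak by (intro sum.cong) (auto simp: inner_Basis)
  also have "\<dots> = f (axis k 1)" using ak by simp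
  finally show ?thesis .
qed

lemma Basis_vec_eq_range_axis: "(Basis :: (real^'n) set) = range (\<lambda>k. axis k 1)"
  by (auto simp: Basis_vec_def)

lemma inj_axis_1: "inj (\<lambda>k::'n::finite. (axis k (1::real) :: real^'n))"
  by (auto simp: inj_on_def axis_eq_axis)

lemma sum_Basis_vec: "(\<Sum>b\<in>(Basis :: (real^'n) set). h b) = (\<Sum>k\<in>UNIV. h (axis k 1))"
  unfolding Basis_vec_eq_range_axis by (subst sum.reindex[OF inj_axis_1]) simp

lemma prod_Basis_vec: "(\<Prod>b\<in>(Basis :: (real^'n) set). h b) = (\<Prod>k\<in>UNIV. h (axis k 1))"
  unfolding Basis_vec_eq_range_axis by (subst prod.reindex[OF inj_axis_1]) simp

lemma borel_measurable_vec_nth[measurable]: "(\<lambda>x::real^'n. x $ k) \<in> borel_measurable borel"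
  by (intro borel_measurable_continuous_onI continuous_intros)

lemma nn_integral_lborel_insert_Basis:
  fixes H :: "real^'n \<Rightarrow> ennreal" and a :: "real^'n" and B :: "(real^'n) set"
  assumes [measurable]: "H \<in> borel_measurable borel" and Bas: "Basis = insert a B" "a \<notin> B"
  shows "(\<integral>\<^sup>+x. H x \<partial>lborel) = (\<integral>\<^sup>+ y. (\<integral>\<^sup>+ f. H (\<Sum>b\<in>Basis. (f(a := y)) b *\<^sub>R b) \<partial>PiM B (\<lambda>_. lborel)) \<partial>lborel)"
proof -
  have finB: "finite B" using Bas by (metis finite_Basis finite_insert)
  have Vm[measurable]: "(\<lambda>f. \<Sum>b\<in>Basis. f b *\<^sub>R b :: real^'n) \<in> borel_measurable (PiM Basis (\<lambda>_. lborel))"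
    by measurable
  have "(\<integral>\<^sup>+x. H x \<partial>lborel) = (\<integral>\<^sup>+x. H x \<partial>distr (PiM Basis (\<lambda>_. lborel)) borel (\<lambda>f. \<Sum>b\<in>Basis. f b *\<^sub>R b :: real^'n))"
    by (subst lborel_eq[where 'a="real^'n"]) simp
  also have "\<dots> = (\<integral>\<^sup>+f. H (\<Sum>b\<in>Basis. f b *\<^sub>R b) \<partial>PiM Basis (\<lambda>_. lborel))"
    by (rule nn_integral_distr) simp_all
  also have "\<dots> = (\<integral>\<^sup>+f. H (\<Sum>b\<in>Basis. f b *\<^sub>R b) \<partial>PiM (insert a B) (\<lambda>_. lborel))"
    using Bas by simp
  also have "\<dots> = (\<integral>\<^sup>+ y. (\<integral>\<^sup>+ f. H (\<Sum>b\<in>Basis. (f(a := y)) b *\<^sub>R b) \<partial>PiM B (\<lambda>_. lborel)) \<partial>lborel)"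
  proof (rule lborel_product.product_nn_integral_insert_rev)
    show "finite B" "a \<notin> B" by (fact finB, fact Bas(2))
    show "(\<lambda>f. H (\<Sum>b\<in>Basis. f b *\<^sub>R b)) \<in> borel_measurable (PiM (insert a B) (\<lambda>_. lborel))"
      using Vm unfolding Bas(1) by measurable
  qed
  finally show ?thesis .
qed

lemma sum_Basis_fun_upd_nth:
  "(\<Sum>b\<in>Basis. (f(axis i 1 := y)) b *\<^sub>R b :: real^'n) $ k = (if k = i then y else f (axis k 1))"
  by (subst sum_Basis_scaleR_nth) (simp add: axis_eq_axis)

section \<open>The truncated normal vector\<close>

text \<open>Product-measure arguments on \<open>real ^ 'n\<close> go through \<open>lborel_eq\<close>, which indexes coordinates
  by the basis vectors \<open>axis k 1\<close>.\<close>
definition axes_except :: "'n::finite \<Rightarrow> (real ^ 'n) set" where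
  "axes_except i = Basis - {axis i 1}"

definition axis_weights :: "('n::finite \<Rightarrow> real) \<Rightarrow> real ^ 'n \<Rightarrow> real" where
  "axis_weights lam b = lam (axis_index b)"

lemma axes_except_facts:
  fixes i j :: "'n::finite"
  shows "finite (axes_except i)" "axis i 1 \<notin> axes_except i" "Basis = insert (axis i 1) (axes_except i)"
    and "i \<noteq> j \<Longrightarrow> axis j 1 \<in> axes_except i"
  by (auto simp: axes_except_def axis_eq_axis Basis_vec_def)

lemma trunc_normal_dens_sum_Basis:
  "trunc_normal_dens lam rho (\<Sum>b\<in>Basis. f b *\<^sub>R b :: real^'n) = gauss_ball_dens Basis (axis_weights lam) rho f"
proof -
  define v where "v = (\<Sum>b\<in>Basis. f b *\<^sub>R b :: real^'n)"
  have vk: "v $ k = f (axis k 1)" for k unfolding v_def by (rule sum_Basis_scaleR_nth)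
  have "v \<bullet> v = (\<Sum>b\<in>Basis. (f b)\<^sup>2)"
    unfolding sum_Basis_vec by (simp add: inner_vec_def vk power2_eq_square)
  moreover have "(\<Prod>n\<in>UNIV. inverse (sqrt (lam n)) * std_normal_density (inverse (sqrt (lam n)) * v $ n))
      = (\<Prod>b\<in>Basis. gauss_dens (lam (axis_index b)) (f b))"
    unfolding prod_Basis_vec by (simp add: vk gauss_dens_def)
  ultimately show ?thesis unfolding v_def[symmetric] trunc_normal_dens_def gauss_ball_dens_def axis_weights_def by simp
qed

lemma trunc_normal_dens_nonneg: "(\<And>n. 0 < lam n) \<Longrightarrow> 0 \<le> trunc_normal_dens lam rho x"
  unfolding trunc_normal_dens_def by (simp add: prod_nonneg normal_density_nonneg less_imp_le)

lemma borel_measurable_trunc_normal_dens[measurable]: "trunc_normal_dens lam rho \<in> borel_measurable borel"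
  unfolding trunc_normal_dens_def[abs_def] by measurable

lemma trunc_normal_dens_fun_upd:
  "trunc_normal_dens lam rho (\<Sum>b\<in>Basis. (f(axis i 1 := y)) b *\<^sub>R b)
    = gauss_dens (lam i) y * gauss_ball_dens (axes_except i) (axis_weights lam) (rho - y\<^sup>2) f"
proof -
  have "trunc_normal_dens lam rho (\<Sum>b\<in>Basis. (f(axis i 1 := y)) b *\<^sub>R b)
      = gauss_ball_dens (insert (axis i 1) (axes_except i)) (axis_weights lam) rho (f(axis i 1 := y))"
    by (simp only: trunc_normal_dens_sum_Basis axes_except_facts(3)[symmetric])
  also have "\<dots> = gauss_dens (lam i) y * gauss_ball_dens (axes_except i) (axis_weights lam) (rho - y\<^sup>2) f"
    by (simp add: gauss_ball_dens_insert axes_except_facts axis_weights_def)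
  finally show ?thesis .
qed

definition trunc_normal_cond_mean :: "('n::finite \<Rightarrow> real) \<Rightarrow> 'n \<Rightarrow> 'n \<Rightarrow> real \<Rightarrow> real" where
  "trunc_normal_cond_mean lam i j s = gauss_ball_cond_mean (axes_except i) (axis_weights lam) (axis j 1) s"

lemma trunc_normal_cond_mean_nonneg: "0 \<le> trunc_normal_cond_mean lam i j s"
  unfolding trunc_normal_cond_mean_def by (rule gauss_ball_cond_mean_nonneg)

lemma trunc_normal_cond_mean_mono:
  assumes "i \<noteq> j" "\<And>n. 0 < lam n" "s \<le> t"
  shows "trunc_normal_cond_mean lam i j s \<le> trunc_normal_cond_mean lam i j t"
  unfolding trunc_normal_cond_mean_def
  using assms by (intro gauss_ball_cond_mean_mono) (auto simp: axes_except_facts axis_weights_def)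

lemma borel_measurable_trunc_normal_cond_mean[measurable]:
  "i \<noteq> j \<Longrightarrow> (\<And>n. 0 < lam n) \<Longrightarrow> trunc_normal_cond_mean lam i j \<in> borel_measurable borel"
  by (rule borel_measurable_mono) (auto simp: mono_def trunc_normal_cond_mean_mono)

lemma nn_integral_trunc_normal_dens_split:
  fixes lam :: "'n::finite \<Rightarrow> real" and H :: "real \<times> real \<Rightarrow> ennreal"
  assumes ij: "i \<noteq> j" and lam: "\<And>n. 0 < lam n" and [measurable]: "H \<in> borel_measurable (lborel \<Otimes>\<^sub>M lborel)"
  shows "(\<integral>\<^sup>+ x. ennreal (trunc_normal_dens lam rho x) * H (x $ i, x $ j) \<partial>lborel)
    = (\<integral>\<^sup>+ y. ennreal (gauss_dens (lam i) y) * (\<integral>\<^sup>+ f. ennreal (gauss_ball_dens (axes_except i) (axis_weights lam) (rho - y\<^sup>2) f)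
        * H (y, f (axis j 1)) \<partial>PiM (axes_except i) (\<lambda>_. lborel)) \<partial>lborel)"
proof -
  define B l where "B = axes_except i" and "l = axis_weights lam"
  have B: "finite B" "axis i 1 \<notin> B" "Basis = insert (axis i 1) B" "axis j 1 \<in> B"
    unfolding B_def using ij by (simp_all add: axes_except_facts)
  have l: "\<And>b. 0 < l b" unfolding l_def axis_weights_def using lam by simp
  have "(\<integral>\<^sup>+ x. ennreal (trunc_normal_dens lam rho x) * H (x $ i, x $ j) \<partial>lborel)
      = (\<integral>\<^sup>+ y. (\<integral>\<^sup>+ f. ennreal (gauss_dens (lam i) y * gauss_ball_dens B l (rho - y\<^sup>2) f)
          * H (y, f (axis j 1)) \<partial>PiM B (\<lambda>_. lborel)) \<partial>lborel)"
    by (subst nn_integral_lborel_insert_Basis[OF _ B(3,2)], measurable)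
      (simp only: sum_Basis_fun_upd_nth trunc_normal_dens_fun_upd B_def l_def, simp add: ij[symmetric])
  also have "\<dots> = (\<integral>\<^sup>+ y. ennreal (gauss_dens (lam i) y)
         * (\<integral>\<^sup>+ f. ennreal (gauss_ball_dens B l (rho - y\<^sup>2) f) * H (y, f (axis j 1)) \<partial>PiM B (\<lambda>_. lborel)) \<partial>lborel)"
  proof (intro nn_integral_cong)
    fix y
    have [measurable]: "gauss_ball_dens B l (rho - y\<^sup>2) \<in> borel_measurable (PiM B (\<lambda>_. lborel))"
      using B(1) by measurable
    have [measurable]: "(\<lambda>f. f (axis j 1)) \<in> PiM B (\<lambda>_. lborel) \<rightarrow>\<^sub>M (lborel :: real measure)"
      by (rule measurable_component_singleton[OF B(4)])
    show "(\<integral>\<^sup>+ f. ennreal (gauss_dens (lam i) y * gauss_ball_dens B l (rho - y\<^sup>2) f) * H (y, f (axis j 1)) \<partial>PiM B (\<lambda>_. lborel))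
      = ennreal (gauss_dens (lam i) y)
         * (\<integral>\<^sup>+ f. ennreal (gauss_ball_dens B l (rho - y\<^sup>2) f) * H (y, f (axis j 1)) \<partial>PiM B (\<lambda>_. lborel))"
      using lam l B(1) by (subst nn_integral_cmult[symmetric], measurable)
        (simp add: ennreal_mult gauss_dens_nonneg gauss_ball_dens_nonneg mult.assoc)
  qed
  finally show ?thesis unfolding B_def l_def .
qed

lemma nn_integral_trunc_normal_dens_sq_coord:
  fixes lam :: "'n::finite \<Rightarrow> real" and \<phi> :: "real \<Rightarrow> ennreal"
  assumes ij: "i \<noteq> j" and lam: "\<And>n. 0 < lam n" and [measurable]: "\<phi> \<in> borel_measurable borel"
  shows "(\<integral>\<^sup>+ x. ennreal (trunc_normal_dens lam rho x) * \<phi> (x $ i) * ennreal ((x $ j)\<^sup>2 / lam j) \<partial>lborel)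
       = (\<integral>\<^sup>+ x. ennreal (trunc_normal_dens lam rho x) * \<phi> (x $ i)
                  * ennreal (trunc_normal_cond_mean lam i j (rho - (x $ i)\<^sup>2)) \<partial>lborel)"
    (is "?L = ?R")
proof -
  define B l where "B = axes_except i" and "l = axis_weights lam"
  have B: "finite B" "axis j 1 \<in> B"
    unfolding B_def using ij by (simp_all add: axes_except_facts)
  have l: "\<And>b. 0 < l b" "l (axis j 1) = lam j" unfolding l_def axis_weights_def using lam by simp_all
  have [measurable]: "(\<lambda>f. f (axis j 1)) \<in> borel_measurable (PiM B (\<lambda>_. lborel :: real measure))"
    using measurable_component_singleton[OF B(2), of "\<lambda>_. lborel :: real measure"] by simp
  have Q_meas[measurable]: "gauss_ball_dens B l u \<in> borel_measurable (PiM B (\<lambda>_. lborel))" for u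
    using B(1) by measurable
  have "?L = (\<integral>\<^sup>+ x. ennreal (trunc_normal_dens lam rho x)
      * (\<lambda>(y, z). \<phi> y * ennreal (z\<^sup>2 / lam j)) (x $ i, x $ j) \<partial>lborel)"
    by (simp add: mult.assoc)
  also have "\<dots> = (\<integral>\<^sup>+ y. ennreal (gauss_dens (lam i) y) * (\<integral>\<^sup>+ f. ennreal (gauss_ball_dens B l (rho - y\<^sup>2) f)
      * (\<lambda>(y, z). \<phi> y * ennreal (z\<^sup>2 / lam j)) (y, f (axis j 1)) \<partial>PiM B (\<lambda>_. lborel)) \<partial>lborel)"
    unfolding B_def l_def using ij lam by (intro nn_integral_trunc_normal_dens_split) measurable
  also have "\<dots> = (\<integral>\<^sup>+ y. ennreal (gauss_dens (lam i) y) * (\<phi> y * gauss_ball_moment B l (axis j 1) (rho - y\<^sup>2)) \<partial>lborel)"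
  proof (intro nn_integral_cong arg_cong2[where f = "(*)"] refl)
    fix y
    have "(\<integral>\<^sup>+ f. ennreal (gauss_ball_dens B l (rho - y\<^sup>2) f) * (\<lambda>(y, z). \<phi> y * ennreal (z\<^sup>2 / lam j)) (y, f (axis j 1))
          \<partial>PiM B (\<lambda>_. lborel))
        = (\<integral>\<^sup>+ f. \<phi> y * ennreal (gauss_ball_dens B l (rho - y\<^sup>2) f * ((f (axis j 1))\<^sup>2 / l (axis j 1)))
          \<partial>PiM B (\<lambda>_. lborel))"
      using lam[of j] by (intro nn_integral_cong)
        (simp add: l(2) ennreal_mult gauss_ball_dens_nonneg[OF l(1)] mult_ac
          del: times_divide_eq_right times_divide_eq_left)
    also have "\<dots> = \<phi> y * gauss_ball_moment B l (axis j 1) (rho - y\<^sup>2)"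
      unfolding gauss_ball_moment_def using B(1) by (intro nn_integral_cmult) measurable
    finally show "(\<integral>\<^sup>+ f. ennreal (gauss_ball_dens B l (rho - y\<^sup>2) f) * (\<lambda>(y, z). \<phi> y * ennreal (z\<^sup>2 / lam j)) (y, f (axis j 1))
          \<partial>PiM B (\<lambda>_. lborel)) = \<phi> y * gauss_ball_moment B l (axis j 1) (rho - y\<^sup>2)" .
  qed
  also have "\<dots> = (\<integral>\<^sup>+ y. ennreal (gauss_dens (lam i) y) * (\<phi> y
      * (ennreal (trunc_normal_cond_mean lam i j (rho - y\<^sup>2)) * gauss_ball_nn B l (rho - y\<^sup>2))) \<partial>lborel)"
    unfolding trunc_normal_cond_mean_def B_def[symmetric] l_def[symmetric]
    using B l by (simp add: gauss_ball_cond_mean_mult)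
  also have "\<dots> = (\<integral>\<^sup>+ y. ennreal (gauss_dens (lam i) y) * (\<integral>\<^sup>+ f. ennreal (gauss_ball_dens B l (rho - y\<^sup>2) f)
      * (\<lambda>(y, z). \<phi> y * ennreal (trunc_normal_cond_mean lam i j (rho - y\<^sup>2))) (y, f (axis j 1)) \<partial>PiM B (\<lambda>_. lborel)) \<partial>lborel)"
    unfolding gauss_ball_nn_def
    by (intro nn_integral_cong arg_cong2[where f = "(*)"] refl)
      (simp add: nn_integral_cmult[symmetric] mult_ac)
  also have "\<dots> = (\<integral>\<^sup>+ x. ennreal (trunc_normal_dens lam rho x)
      * (\<lambda>(y, z). \<phi> y * ennreal (trunc_normal_cond_mean lam i j (rho - y\<^sup>2))) (x $ i, x $ j) \<partial>lborel)"
    unfolding B_def l_def using ij lam by (intro nn_integral_trunc_normal_dens_split[symmetric]) measurable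
  also have "\<dots> = ?R"
    by (simp add: mult.assoc)
  finally show ?thesis .
qed

lemma nn_integral_distributed_trunc_normal:
  assumes "distributed M lborel X (\<lambda>x. ennreal (c * trunc_normal_dens lam rho x))" "0 < c" "\<And>n. 0 < lam n"
    and [measurable]: "H \<in> borel_measurable borel"
  shows "(\<integral>\<^sup>+ \<omega>. H (X \<omega>) \<partial>M) = ennreal c * (\<integral>\<^sup>+ x. ennreal (trunc_normal_dens lam rho x) * H x \<partial>lborel)"
proof -
  have "(\<integral>\<^sup>+ \<omega>. H (X \<omega>) \<partial>M) = (\<integral>\<^sup>+ x. ennreal c * (ennreal (trunc_normal_dens lam rho x) * H x) \<partial>lborel)"
    using distributed_nn_integral[OF assms(1), of H] assms(2,3)
    by (simp add: ennreal_mult trunc_normal_dens_nonneg mult.assoc)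
  also have "\<dots> = ennreal c * (\<integral>\<^sup>+ x. ennreal (trunc_normal_dens lam rho x) * H x \<partial>lborel)"
    by (rule nn_integral_cmult) measurable
  finally show ?thesis .
qed

lemma integrable_trunc_normal_sq_coord:
  fixes X :: "'a \<Rightarrow> real ^ 'n::finite" and lam :: "'n \<Rightarrow> real"
  assumes "prob_space M" "\<And>n. 0 < lam n" "0 < c"
    and D: "distributed M lborel X (\<lambda>x. ennreal (c * trunc_normal_dens lam rho x))"
  shows "integrable M (\<lambda>\<omega>. (X \<omega> $ j)\<^sup>2 / lam j)"
proof (rule integrableI_nonneg)
  interpret prob_space M by fact
  have [measurable]: "X \<in> borel_measurable M" using distributed_measurable[OF D] by simp
  show "(\<lambda>\<omega>. (X \<omega> $ j)\<^sup>2 / lam j) \<in> borel_measurable M" by measurable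
  show "AE \<omega> in M. 0 \<le> (X \<omega> $ j)\<^sup>2 / lam j" using assms(2) by (simp add: less_imp_le)
  have bound: "ennreal (trunc_normal_dens lam rho x) * ennreal ((x $ j)\<^sup>2 / lam j)
      \<le> ennreal (trunc_normal_dens lam rho x) * ennreal (\<bar>rho\<bar> / lam j)" for x :: "real^'n"
  proof (cases "x \<bullet> x < rho")
    case True
    have "(x $ j)\<^sup>2 \<le> (\<Sum>k\<in>UNIV. x $ k * x $ k)"
      using member_le_sum[of j UNIV "\<lambda>k. x $ k * x $ k"] by (simp add: power2_eq_square)
    also have "\<dots> = x \<bullet> x" by (simp add: inner_vec_def)
    finally show ?thesis
      using True assms(2)[of j] by (intro mult_left_mono ennreal_leI divide_right_mono) auto
  qed (simp add: trunc_normal_dens_def)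
  have "(\<integral>\<^sup>+ \<omega>. ennreal ((X \<omega> $ j)\<^sup>2 / lam j) \<partial>M)
      = ennreal c * (\<integral>\<^sup>+ x. ennreal (trunc_normal_dens lam rho x) * ennreal ((x $ j)\<^sup>2 / lam j) \<partial>lborel)"
    using D assms(3,2) by (rule nn_integral_distributed_trunc_normal) measurable
  also have "\<dots> \<le> ennreal c * (\<integral>\<^sup>+ x. ennreal (trunc_normal_dens lam rho x) * ennreal (\<bar>rho\<bar> / lam j) \<partial>lborel)"
    by (intro mult_left_mono nn_integral_mono bound) simp
  also have "\<dots> = (\<integral>\<^sup>+ \<omega>. ennreal (\<bar>rho\<bar> / lam j) \<partial>M)"
    using D assms(3,2) by (rule nn_integral_distributed_trunc_normal[symmetric]) simp
  also have "\<dots> < \<infinity>" by (simp add: emeasure_space_1)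
  finally show "(\<integral>\<^sup>+ \<omega>. ennreal ((X \<omega> $ j)\<^sup>2 / lam j) \<partial>M) < \<infinity>" .
qed

lemma set_integral_trunc_normal_coord_event:
  fixes X :: "'a \<Rightarrow> real ^ 'n::finite" and lam :: "'n \<Rightarrow> real" and h :: "real ^ 'n \<Rightarrow> real"
  assumes lam: "\<And>n. 0 < lam n" and c: "0 < c"
    and D: "distributed M lborel X (\<lambda>x. ennreal (c * trunc_normal_dens lam rho x))"
    and [measurable]: "S \<in> sets borel" "h \<in> borel_measurable borel" and h_nn: "\<And>x. 0 \<le> h x"
  shows "(\<integral>\<omega>\<in>(\<lambda>\<omega>. (X \<omega> $ i)\<^sup>2 / lam i) -` S \<inter> space M. h (X \<omega>) \<partial>M)
    = enn2real (\<integral>\<^sup>+ x. ennreal (trunc_normal_dens lam rho x) * ennreal (c * indicator S ((x $ i)\<^sup>2 / lam i))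
        * ennreal (h x) \<partial>lborel)"
proof -
  have [measurable]: "X \<in> borel_measurable M" using distributed_measurable[OF D] by simp
  have "(\<integral>\<omega>\<in>(\<lambda>\<omega>. (X \<omega> $ i)\<^sup>2 / lam i) -` S \<inter> space M. h (X \<omega>) \<partial>M)
      = enn2real (\<integral>\<^sup>+ \<omega>. ennreal (indicator S ((X \<omega> $ i)\<^sup>2 / lam i) * h (X \<omega>)) \<partial>M)"
    unfolding set_lebesgue_integral_def using h_nn
    by (subst integral_eq_nn_integral) (auto intro!: arg_cong[where f = enn2real] nn_integral_cong
        simp: indicator_def)
  also have "\<dots> = enn2real (ennreal c * (\<integral>\<^sup>+ x. ennreal (trunc_normal_dens lam rho x)
      * ennreal (indicator S ((x $ i)\<^sup>2 / lam i) * h x) \<partial>lborel))"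
    using D c lam by (subst nn_integral_distributed_trunc_normal) auto
  also have "\<dots> = enn2real (\<integral>\<^sup>+ x. ennreal (trunc_normal_dens lam rho x) * ennreal (c * indicator S ((x $ i)\<^sup>2 / lam i))
      * ennreal (h x) \<partial>lborel)"
    using c h_nn
    by (subst nn_integral_cmult[symmetric]) (auto intro!: arg_cong[where f = enn2real] nn_integral_cong
        simp: ennreal_mult mult_ac)
  finally show ?thesis .
qed

lemma real_cond_exp_trunc_normal_sq_coord:
  fixes M :: "'a measure" and X :: "'a \<Rightarrow> real ^ 'n::finite" and lam :: "'n \<Rightarrow> real"
  assumes "prob_space M" and ij: "i \<noteq> j" and lam: "\<And>n. 0 < lam n" and c: "0 < c"
    and D: "distributed M lborel X (\<lambda>x. ennreal (c * trunc_normal_dens lam rho x))"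
  defines "Yi \<equiv> \<lambda>\<omega>. (X \<omega> $ i)\<^sup>2 / lam i" and "Yj \<equiv> \<lambda>\<omega>. (X \<omega> $ j)\<^sup>2 / lam j"
    and "m \<equiv> \<lambda>y. trunc_normal_cond_mean lam i j (rho - lam i * y)"
  shows "AE \<omega> in M. real_cond_exp M (vimage_algebra (space M) Yi borel) Yj \<omega> = m (Yi \<omega>)"
proof -
  interpret prob_space M by fact
  define F where "F = vimage_algebra (space M) Yi borel"
  have [measurable]: "X \<in> borel_measurable M" using distributed_measurable[OF D] by simp
  have [measurable]: "Yi \<in> borel_measurable M" "Yj \<in> borel_measurable M" "m \<in> borel_measurable borel"
    unfolding Yi_def Yj_def m_def using ij lam by measurable
  have YiF[measurable]: "Yi \<in> borel_measurable F"
    unfolding F_def by (rule measurable_vimage_algebra1) simp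
  interpret F: finite_measure_subalgebra M F
    by standard (simp add: subalgebra_def F_def sets_image_in_sets)
  have m_Yi: "m (Yi \<omega>) = trunc_normal_cond_mean lam i j (rho - (X \<omega> $ i)\<^sup>2)" for \<omega>
    unfolding m_def Yi_def using lam[of i] by simp
  have "integrable M (\<lambda>\<omega>. m (Yi \<omega>))"
  proof (rule integrable_const_bound[where B = "trunc_normal_cond_mean lam i j rho"])
    have "norm (m (Yi \<omega>)) \<le> trunc_normal_cond_mean lam i j rho" for \<omega>
      unfolding m_Yi using ij lam by (simp add: trunc_normal_cond_mean_nonneg trunc_normal_cond_mean_mono)
    then show "AE \<omega> in M. norm (m (Yi \<omega>)) \<le> trunc_normal_cond_mean lam i j rho" by simp
  qed simp
  moreover have "integrable M Yj"
    unfolding Yj_def using assms(1) lam c D by (rule integrable_trunc_normal_sq_coord)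
  moreover have "(\<integral>\<omega>\<in>A. Yj \<omega> \<partial>M) = (\<integral>\<omega>\<in>A. m (Yi \<omega>) \<partial>M)" if "A \<in> sets F" for A
  proof -
    obtain S where S[measurable]: "S \<in> sets borel" and A: "A = Yi -` S \<inter> space M"
      using \<open>A \<in> sets F\<close> unfolding F_def by (subst (asm) sets_vimage_algebra2) auto
    define \<phi> where "\<phi> y = ennreal (c * indicator S (y\<^sup>2 / lam i))" for y
    have [measurable]: "\<phi> \<in> borel_measurable borel" unfolding \<phi>_def by measurable
    have set_integral: "(\<integral>\<omega>\<in>A. h (X \<omega>) \<partial>M)
        = enn2real (\<integral>\<^sup>+ x. ennreal (trunc_normal_dens lam rho x) * \<phi> (x $ i) * ennreal (h x) \<partial>lborel)"
      if "h \<in> borel_measurable borel" "\<And>x. 0 \<le> h x" for h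
      unfolding A Yi_def \<phi>_def using lam c D S that by (rule set_integral_trunc_normal_coord_event)
    have "(\<integral>\<omega>\<in>A. Yj \<omega> \<partial>M)
        = enn2real (\<integral>\<^sup>+ x. ennreal (trunc_normal_dens lam rho x) * \<phi> (x $ i) * ennreal ((x $ j)\<^sup>2 / lam j) \<partial>lborel)"
      unfolding Yj_def using lam by (intro set_integral) (auto simp: less_imp_le)
    also have "\<dots> = enn2real (\<integral>\<^sup>+ x. ennreal (trunc_normal_dens lam rho x) * \<phi> (x $ i)
        * ennreal (trunc_normal_cond_mean lam i j (rho - (x $ i)\<^sup>2)) \<partial>lborel)"
      using ij lam by (simp add: nn_integral_trunc_normal_dens_sq_coord)
    also have "\<dots> = (\<integral>\<omega>\<in>A. m (Yi \<omega>) \<partial>M)"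
      unfolding m_Yi using ij lam
      by (intro set_integral[symmetric]) (auto simp: trunc_normal_cond_mean_nonneg)
    finally show ?thesis .
  qed
  ultimately have "AE \<omega> in M. real_cond_exp M F Yj \<omega> = m (Yi \<omega>)"
    by (intro F.real_cond_exp_charact) auto
  then show ?thesis unfolding F_def .
qed

theorem mainTheorem8:
  fixes M :: "'a measure" and X :: "'a \<Rightarrow> real ^ 'n::finite"
    and lam :: "'n \<Rightarrow> real" and rho c :: real and i j :: 'n
  assumes "prob_space M"
    and "i \<noteq> j"
    and "rho > 0"
    and "\<And>n. lam n > 0"
    and "c > 0"
    and "distributed M lborel X (\<lambda>x. ennreal (c * trunc_normal_dens lam rho x))"
  defines "Y \<equiv> (\<lambda>n \<omega>. (X \<omega> $ n)\<^sup>2 / lam n)"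
  shows "\<exists>g :: real \<Rightarrow> real.
           (\<forall>a b. 0 < a \<and> a \<le> b \<and> b < rho / lam i \<longrightarrow> g b \<le> g a) \<and>
           (AE \<omega> in M. real_cond_exp M (vimage_algebra (space M) (Y i) borel) (Y j) \<omega> = g (Y i \<omega>))"
proof (intro exI conjI allI impI)
  define g where "g y = trunc_normal_cond_mean lam i j (rho - lam i * y)" for y
  show "g b \<le> g a" if "0 < a \<and> a \<le> b \<and> b < rho / lam i" for a b
    unfolding g_def using that assms(2,4) assms(4)[of i]
    by (intro trunc_normal_cond_mean_mono) (auto intro: mult_left_mono)
  show "AE \<omega> in M. real_cond_exp M (vimage_algebra (space M) (Y i) borel) (Y j) \<omega> = g (Y i \<omega>)"
    unfolding Y_def g_def using assms(1,2,4,5,6) by (rule real_cond_exp_trunc_normal_sq_coord)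
qed

end
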